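(* Let $\mathbf{A}$ be a finite idempotent algebra and $B$ a subuniverse of $\mathbf{A}$. Then $B$ Jónsson absorbs $\mathbf{A}$ if and only if for all $a,c,d\in A$ and all $b_1,b_2\in B$, the digraph $(A,E)$ with edge set $E=\{(u,v)\in A^2 : \exists b\in B,\ (b,u,v)\in R\}$, where $R$ is the subuniverse of $\mathbf{A}^3$ generated by $(b_1,a,a)$, $(b_2,c,c)$, $(d,a,c)$, contains a directed path from $a$ to $c$.
   Context: Jónsson absorption: a subuniverse $B$ of $\mathbf{A}$ Jónsson absorbs $\mathbf{A}$ if there are ternary terms $d_0,\dots,d_n$ of $\mathbf{A}$ such that $d_i(b,a,b')\in B$ for all $i$, all $b,b'\in B$, $a\in A$; $d_i(x,y,y)=d_{i+1}(x,x,y)$ for all $i<n$ and all $x,y\in A$; $d_0(x,y,z)=x$ and $d_n(x,y,z)=z$. An algebra is idempotent if every basic operation $f$ satisfies $f(x,\dots,x)\approx x$. *)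

theory Defs
  imports Main
begin

text \<open>An algebra is given by a carrier set A and a set F of basic operations,
  each a pair (n, f) of an arity n and a function f acting on argument lists of length n.\<close>

type_synonym 'a ops = "(nat \<times> ('a list \<Rightarrow> 'a)) set"

definition is_algebra :: "'a set \<Rightarrow> 'a ops \<Rightarrow> bool" where
  "is_algebra A F \<longleftrightarrow>
     (\<forall>(n, f) \<in> F. \<forall>xs. length xs = n \<and> set xs \<subseteq> A \<longrightarrow> f xs \<in> A)"

definition idempotent_alg :: "'a set \<Rightarrow> 'a ops \<Rightarrow> bool" where
  "idempotent_alg A F \<longleftrightarrow> (\<forall>(n, f) \<in> F. \<forall>x \<in> A. f (replicate n x) = x)"

definition subuniverse :: "'a set \<Rightarrow> 'a ops \<Rightarrow> 'a set \<Rightarrow> bool" where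
  "subuniverse A F B \<longleftrightarrow> B \<subseteq> A \<and>
     (\<forall>(n, f) \<in> F. \<forall>xs. length xs = n \<and> set xs \<subseteq> B \<longrightarrow> f xs \<in> B)"

definition subuniverse3 :: "'a set \<Rightarrow> 'a ops \<Rightarrow> ('a \<times> 'a \<times> 'a) set \<Rightarrow> bool" where
  "subuniverse3 A F R \<longleftrightarrow> R \<subseteq> A \<times> A \<times> A \<and>
     (\<forall>(n, f) \<in> F. \<forall>rs. length rs = n \<and> set rs \<subseteq> R \<longrightarrow>
        (f (map fst rs), f (map (fst \<circ> snd) rs), f (map (snd \<circ> snd) rs)) \<in> R)"

definition Sg3 :: "'a set \<Rightarrow> 'a ops \<Rightarrow> ('a \<times> 'a \<times> 'a) set \<Rightarrow> ('a \<times> 'a \<times> 'a) set" where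
  "Sg3 A F G = \<Inter> {R. subuniverse3 A F R \<and> G \<subseteq> R}"

inductive_set term_ops :: "'a ops \<Rightarrow> nat \<Rightarrow> ('a list \<Rightarrow> 'a) set" for F k where
  proj: "i < k \<Longrightarrow> (\<lambda>xs. xs ! i) \<in> term_ops F k"
| app: "(n, f) \<in> F \<Longrightarrow> length gs = n \<Longrightarrow> \<forall>g\<in>set gs. g \<in> term_ops F k \<Longrightarrow>
          (\<lambda>xs. f (map (\<lambda>g. g xs) gs)) \<in> term_ops F k"

definition jonsson_absorbs :: "'a set \<Rightarrow> 'a ops \<Rightarrow> 'a set \<Rightarrow> bool" where
  "jonsson_absorbs A F B \<longleftrightarrow>
     (\<exists>(n::nat) (d :: nat \<Rightarrow> 'a list \<Rightarrow> 'a).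
        (\<forall>i\<le>n. d i \<in> term_ops F 3) \<and>
        (\<forall>i\<le>n. \<forall>b\<in>B. \<forall>a\<in>A. \<forall>b'\<in>B. d i [b, a, b'] \<in> B) \<and>
        (\<forall>i<n. \<forall>x\<in>A. \<forall>y\<in>A. d i [x, y, y] = d (Suc i) [x, x, y]) \<and>
        (\<forall>x\<in>A. \<forall>y\<in>A. \<forall>z\<in>A. d 0 [x, y, z] = x \<and> d n [x, y, z] = z))"

definition edgeE :: "'a set \<Rightarrow> 'a ops \<Rightarrow> 'a set \<Rightarrow> 'a \<Rightarrow> 'a \<Rightarrow> 'a \<Rightarrow> 'a \<Rightarrow> 'a \<Rightarrow> ('a \<times> 'a) set" where
  "edgeE A F B a c d b1 b2 =
     {(u, v). u \<in> A \<and> v \<in> A \<and>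
        (\<exists>b\<in>B. (b, u, v) \<in> Sg3 A F {(b1, a, a), (b2, c, c), (d, a, c)})}"

end

theory Submission
  imports Defs
begin

text \<open>Call a ternary term t absorbing if t(b, x, b') \<in> B for all b, b' \<in> B and x \<in> A.
  The edges of the theorem are the pairs (t(a,a,c), t(a,c,c)) over the terms t with
  t(b1, d, b2) \<in> B.  Jonsson terms yield, for all a, c, a path from a to c even along edges
  of absorbing terms.  Conversely, paths for single triples are combined into paths for any
  finite set of triples in B \<times> A \<times> B by substituting one path into the terms of the next;
  for the set of all such triples the edges are those of absorbing terms.  Running these paths
  coordinatewise on tuples indexed by A \<times> A, with the sizes of the subalgebras Sg(a_k, c_k)
  as induction measure, gives a path of absorbing edges from the tuple of first coordinates
  to the tuple of second coordinates, and the terms labelling it form a Jonsson chain.\<close>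

definition term_comp3 ::
    "('a list \<Rightarrow> 'a) \<Rightarrow> ('a list \<Rightarrow> 'a) \<Rightarrow> ('a list \<Rightarrow> 'a) \<Rightarrow> ('a list \<Rightarrow> 'a) \<Rightarrow> 'a list \<Rightarrow> 'a" where
  "term_comp3 t f g h = (\<lambda>xs. t [f xs, g xs, h xs])"

definition term_proj :: "nat \<Rightarrow> 'a list \<Rightarrow> 'a" where
  "term_proj i = (\<lambda>xs. xs ! i)"

lemma term_comp3_apply [simp]: "term_comp3 t f g h xs = t [f xs, g xs, h xs]"
  by (simp add: term_comp3_def)

lemma term_proj_apply [simp]:
  "term_proj 0 [x, y, z] = x" "term_proj 1 [x, y, z] = y" "term_proj (Suc 0) [x, y, z] = y"
  "term_proj 2 [x, y, z] = z"
  by (simp_all add: term_proj_def)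

lemma term_ops_compose:
  assumes "t \<in> term_ops F k" "\<forall>g\<in>set gs. g \<in> term_ops F m" "length gs = k"
  shows "(\<lambda>xs. t (map (\<lambda>g. g xs) gs)) \<in> term_ops F m"
  using assms
proof (induction t rule: term_ops.induct)
  case (proj i)
  then have "(\<lambda>xs. map (\<lambda>g. g xs) gs ! i) = gs ! i" by auto
  with proj show ?case by auto
next
  case (app n f hs)
  let ?hs = "map (\<lambda>h xs. h (map (\<lambda>g. g xs) gs)) hs"
  have "(\<lambda>xs. f (map (\<lambda>g. g xs) ?hs)) \<in> term_ops F m"
    by (rule term_ops.app[OF app(1)]) (use app in auto)
  then show ?case by (simp add: o_def)
qed

lemma term_proj_in_term_ops [simp]: "i < k \<Longrightarrow> term_proj i \<in> term_ops F k"
  unfolding term_proj_def by (rule term_ops.proj)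

lemma term_comp3_in_term_ops:
  assumes "t \<in> term_ops F 3" "f \<in> term_ops F 3" "g \<in> term_ops F 3" "h \<in> term_ops F 3"
  shows "term_comp3 t f g h \<in> term_ops F 3"
proof -
  have "(\<lambda>xs. t (map (\<lambda>g. g xs) [f, g, h])) \<in> term_ops F 3"
    by (rule term_ops_compose[OF assms(1)]) (use assms in auto)
  then show ?thesis by (simp add: term_comp3_def)
qed

lemma term_ops_closed:
  assumes "t \<in> term_ops F k"
    and closed: "\<forall>(n, f) \<in> F. \<forall>xs. length xs = n \<and> set xs \<subseteq> C \<longrightarrow> f xs \<in> C"
    and "length xs = k" "set xs \<subseteq> C"
  shows "t xs \<in> C"
  using assms(1)
proof (induction t rule: term_ops.induct)
  case (app n f gs)
  have "set (map (\<lambda>g. g xs) gs) \<subseteq> C" using app by auto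
  with app(1,2) closed show ?case by auto
qed (use assms in auto)

lemma term_ops_idempotent:
  assumes "t \<in> term_ops F k" "idempotent_alg A F" "x \<in> A"
  shows "t (replicate k x) = x"
  using assms(1)
proof (induction t rule: term_ops.induct)
  case (app n f gs)
  have "map (\<lambda>g. g (replicate k x)) gs = replicate n x"
    using app(2,3) by (induction gs arbitrary: n) auto
  with assms(2,3) app(1) show ?case by (auto simp: idempotent_alg_def)
qed simp

lemma term_ops_preserve_subuniverse3:
  assumes "subuniverse3 A F R" "t \<in> term_ops F k"
    and gen: "\<forall>i<k. (xs ! i, ys ! i, zs ! i) \<in> R"
  shows "(t xs, t ys, t zs) \<in> R"
  using assms(2)
proof (induction t rule: term_ops.induct)
  case (app n f gs)
  let ?rs = "map (\<lambda>g. (g xs, g ys, g zs)) gs"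
  have "set ?rs \<subseteq> R" "length ?rs = n" using app(2,3) by auto
  with app(1) assms(1) have
    "(f (map fst ?rs), f (map (fst \<circ> snd) ?rs), f (map (snd \<circ> snd) ?rs)) \<in> R"
    unfolding subuniverse3_def by blast
  then show ?case by (simp add: o_def)
qed (use gen in simp)

lemma rtrancl_exit:
  assumes "(x, y) \<in> r\<^sup>*" "P x" "\<not> P y"
  obtains u v where "(u, v) \<in> r" "P u" "\<not> P v"
  using assms by (induction rule: rtrancl_induct) blast+

lemma sum_card_strict_mono:
  assumes "finite I" "i \<in> I" "\<forall>k\<in>I. finite (S k)" "\<forall>k\<in>I. S' k \<subseteq> S k" "S' i \<subset> S i"
  shows "(\<Sum>k\<in>I. card (S' k)) < (\<Sum>k\<in>I. card (S k))"
proof (rule sum_strict_mono_ex1[OF assms(1)])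
  show "\<forall>k\<in>I. card (S' k) \<le> card (S k)" using assms(3,4) by (simp add: card_mono)
  show "\<exists>k\<in>I. card (S' k) < card (S k)" using assms(2,3,5) by (meson psubset_card_mono)
qed

locale idempotent_subuniverse =
  fixes A :: "'a set" and F :: "'a ops" and B :: "'a set"
  assumes algebra: "is_algebra A F" and finite_A: "finite A"
    and idempotent: "idempotent_alg A F" and subuniverse: "subuniverse A F B"
begin

abbreviation T3 :: "('a list \<Rightarrow> 'a) set" where "T3 \<equiv> term_ops F 3"

lemma term_proj_T3 [simp]: "term_proj 0 \<in> T3" "term_proj 1 \<in> T3" "term_proj 2 \<in> T3"
  by simp_all

lemma B_subset_A: "B \<subseteq> A"
  using subuniverse unfolding subuniverse_def by simp

lemma T3_closed_A: "t \<in> T3 \<Longrightarrow> x \<in> A \<Longrightarrow> y \<in> A \<Longrightarrow> z \<in> A \<Longrightarrow> t [x, y, z] \<in> A"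
  using term_ops_closed[of t F 3 A "[x, y, z]"] algebra unfolding is_algebra_def by simp

lemma T3_closed_B: "t \<in> T3 \<Longrightarrow> x \<in> B \<Longrightarrow> y \<in> B \<Longrightarrow> z \<in> B \<Longrightarrow> t [x, y, z] \<in> B"
  using term_ops_closed[of t F 3 B "[x, y, z]"] subuniverse unfolding subuniverse_def by simp

lemma T3_idempotent: "t \<in> T3 \<Longrightarrow> x \<in> A \<Longrightarrow> t [x, x, x] = x"
  using term_ops_idempotent[of t F 3 A x] idempotent by (simp add: numeral_3_eq_3)

lemma Sg3_eq_term_images:
  assumes "x0 \<in> A" "x1 \<in> A" "x2 \<in> A" "y0 \<in> A" "y1 \<in> A" "y2 \<in> A" "z0 \<in> A" "z1 \<in> A" "z2 \<in> A"
  shows "Sg3 A F {(x0, y0, z0), (x1, y1, z1), (x2, y2, z2)} =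
    {(t [x0, x1, x2], t [y0, y1, y2], t [z0, z1, z2]) | t. t \<in> T3}" (is "?S = ?T")
proof
  show "?T \<subseteq> ?S"
  proof (unfold Sg3_def, safe)
    fix t R assume t: "t \<in> T3" and R: "subuniverse3 A F R"
      and gen: "{(x0, y0, z0), (x1, y1, z1), (x2, y2, z2)} \<subseteq> R"
    have "([x0, x1, x2] ! i, [y0, y1, y2] ! i, [z0, z1, z2] ! i) \<in> R" if "i < 3" for i
    proof -
      from that consider "i = 0" | "i = 1" | "i = 2" by linarith
      then show ?thesis using gen by cases simp_all
    qed
    then show "(t [x0, x1, x2], t [y0, y1, y2], t [z0, z1, z2]) \<in> R"
      using term_ops_preserve_subuniverse3[OF R t] by blast
  qed
next
  have "(f (map fst rs), f (map (fst \<circ> snd) rs), f (map (snd \<circ> snd) rs)) \<in> ?T"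
    if "(n, f) \<in> F" "length rs = n" "set rs \<subseteq> ?T" for n f rs
  proof -
    have "\<forall>r\<in>set rs. \<exists>t. t \<in> T3 \<and> r = (t [x0, x1, x2], t [y0, y1, y2], t [z0, z1, z2])"
      using that(3) by blast
    then obtain \<tau> where \<tau>: "\<forall>r\<in>set rs. \<tau> r \<in> T3 \<and>
        r = (\<tau> r [x0, x1, x2], \<tau> r [y0, y1, y2], \<tau> r [z0, z1, z2])"
      by (rule bchoice[THEN exE])
    let ?t = "\<lambda>ws. f (map (\<lambda>g. g ws) (map \<tau> rs))"
    have t: "?t \<in> T3" by (rule term_ops.app[OF that(1)]) (use that(2) \<tau> in auto)
    have maps: "map fst rs = map (\<lambda>g. g [x0, x1, x2]) (map \<tau> rs)"
      "map (fst \<circ> snd) rs = map (\<lambda>g. g [y0, y1, y2]) (map \<tau> rs)"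
      "map (snd \<circ> snd) rs = map (\<lambda>g. g [z0, z1, z2]) (map \<tau> rs)"
      using \<tau> by (auto intro!: map_cong)
    show ?thesis unfolding maps by (intro CollectI exI[of _ ?t]) (use t in simp)
  qed
  moreover have "?T \<subseteq> A \<times> A \<times> A"
    using assms by (auto intro!: T3_closed_A)
  ultimately have "subuniverse3 A F ?T" unfolding subuniverse3_def by blast
  moreover have "(x0, y0, z0) \<in> ?T" by (intro CollectI exI[of _ "term_proj 0"]) simp
  moreover have "(x1, y1, z1) \<in> ?T" by (intro CollectI exI[of _ "term_proj 1"]) simp
  moreover have "(x2, y2, z2) \<in> ?T" by (intro CollectI exI[of _ "term_proj 2"]) simp
  ultimately show "?S \<subseteq> ?T" unfolding Sg3_def by blast
qed

definition absorbing :: "('a list \<Rightarrow> 'a) \<Rightarrow> bool" where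
  "absorbing t \<longleftrightarrow> (\<forall>b\<in>B. \<forall>x\<in>A. \<forall>b'\<in>B. t [b, x, b'] \<in> B)"

lemma absorbing_iff: "absorbing t \<longleftrightarrow> (\<forall>(x, y, z)\<in>B \<times> A \<times> B. t [x, y, z] \<in> B)"
  unfolding absorbing_def by auto

lemma absorbing_term_proj: "absorbing (term_proj 0)" "absorbing (term_proj 2)"
  unfolding absorbing_def by simp_all

definition edges_on :: "('a \<times> 'a \<times> 'a) set \<Rightarrow> 'a \<Rightarrow> 'a \<Rightarrow> ('a \<times> 'a) set" where
  "edges_on Q a c = {(t [a, a, c], t [a, c, c]) | t. t \<in> T3 \<and> (\<forall>(x, y, z)\<in>Q. t [x, y, z] \<in> B)}"

lemma edges_on_antimono: "Q \<subseteq> Q' \<Longrightarrow> edges_on Q' a c \<subseteq> edges_on Q a c"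
  unfolding edges_on_def by blast

lemma edges_on_absorbing:
  "t \<in> T3 \<Longrightarrow> absorbing t \<Longrightarrow> (t [a, a, c], t [a, c, c]) \<in> edges_on (B \<times> A \<times> B) a c"
  unfolding edges_on_def absorbing_iff by blast

lemma edgeE_eq_edges_on:
  assumes "a \<in> A" "c \<in> A" "d \<in> A" "b1 \<in> B" "b2 \<in> B"
  shows "edgeE A F B a c d b1 b2 = edges_on {(b1, d, b2)} a c"
proof -
  \<comment> \<open>the generators are ordered so that the coordinate in B is t(b1, b2, d); swapping the
    last two arguments of t gives the form t(b1, d, b2) used by edges_on\<close>
  let ?swap = "\<lambda>t. term_comp3 t (term_proj 0) (term_proj 2) (term_proj 1)"
  have swap: "t \<in> T3 \<Longrightarrow> ?swap t \<in> T3" for t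
    by (intro term_comp3_in_term_ops term_proj_T3)
  have S: "Sg3 A F {(b1, a, a), (b2, c, c), (d, a, c)} =
      {(t [b1, b2, d], t [a, c, a], t [a, c, c]) | t. t \<in> T3}"
    using assms B_subset_A by (intro Sg3_eq_term_images) blast+
  show ?thesis
  proof (intro equalityI subsetI)
    fix e assume "e \<in> edgeE A F B a c d b1 b2"
    then obtain t where t: "t \<in> T3" "t [b1, b2, d] \<in> B" "e = (t [a, c, a], t [a, c, c])"
      unfolding edgeE_def S by blast
    then show "e \<in> edges_on {(b1, d, b2)} a c"
      unfolding edges_on_def by (intro CollectI exI[of _ "?swap t"]) (use swap in simp)
  next
    fix e assume "e \<in> edges_on {(b1, d, b2)} a c"
    then obtain t where t: "t \<in> T3" "t [b1, d, b2] \<in> B" "e = (t [a, a, c], t [a, c, c])"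
      unfolding edges_on_def by auto
    have "(t [b1, d, b2], t [a, a, c], t [a, c, c]) \<in> Sg3 A F {(b1, a, a), (b2, c, c), (d, a, c)}"
      unfolding S by (intro CollectI exI[of _ "?swap t"]) (use swap[OF t(1)] in simp)
    moreover have "t [a, a, c] \<in> A" "t [a, c, c] \<in> A" using T3_closed_A t(1) assms(1,2) by auto
    ultimately show "e \<in> edgeE A F B a c d b1 b2" unfolding edgeE_def using t(2,3) by blast
  qed
qed

definition push_triple :: "('a list \<Rightarrow> 'a) \<Rightarrow> 'a \<times> 'a \<times> 'a \<Rightarrow> 'a \<times> 'a \<times> 'a" where
  "push_triple s = (\<lambda>(x, y, z). (s [x, x, z], s [x, y, z], s [x, z, z]))"

text \<open>Substituting s into an edge term r from s(a,a,c) to s(a,c,c) gives the edge term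
  r(s(x,x,z), s(x,y,z), s(x,z,z)) from a to c; it sends (b, m, b') into B because s does,
  and a triple of Q into B because r sends its push_triple image into B.\<close>

lemma edges_on_push_triple:
  assumes s: "s \<in> T3" "b \<in> B" "b' \<in> B" "s [b, m, b'] \<in> B"
  shows "edges_on (push_triple s ` Q) (s [a, a, c]) (s [a, c, c]) \<subseteq> edges_on (insert (b, m, b') Q) a c"
proof
  fix e assume "e \<in> edges_on (push_triple s ` Q) (s [a, a, c]) (s [a, c, c])"
  then obtain r where r: "r \<in> T3" "\<forall>(x, y, z)\<in>push_triple s ` Q. r [x, y, z] \<in> B"
    and e: "e = (r [s [a, a, c], s [a, a, c], s [a, c, c]], r [s [a, a, c], s [a, c, c], s [a, c, c]])"
    unfolding edges_on_def by blast
  define t where "t = term_comp3 r (term_comp3 s (term_proj 0) (term_proj 0) (term_proj 2)) s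
      (term_comp3 s (term_proj 0) (term_proj 2) (term_proj 2))"
  have "t \<in> T3" unfolding t_def using r(1) s(1)
    by (intro term_comp3_in_term_ops term_proj_T3)
  moreover have "t [b, m, b'] \<in> B"
  proof -
    have "s [b, b, b'] \<in> B" "s [b, b', b'] \<in> B"
      using T3_closed_B[OF s(1)] s(2,3) by blast+
    then show ?thesis
      unfolding t_def term_comp3_apply term_proj_apply using T3_closed_B[OF r(1)] s(4) by blast
  qed
  moreover have "t [x, y, z] \<in> B" if "(x, y, z) \<in> Q" for x y z
  proof -
    have "push_triple s (x, y, z) \<in> push_triple s ` Q" using that by (rule imageI)
    from bspec[OF r(2) this] show ?thesis by (simp add: t_def push_triple_def)
  qed
  ultimately have "t \<in> T3 \<and> (\<forall>(x, y, z)\<in>insert (b, m, b') Q. t [x, y, z] \<in> B)"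
    by auto
  moreover have "e = (t [a, a, c], t [a, c, c])" unfolding e t_def by simp
  ultimately show "e \<in> edges_on (insert (b, m, b') Q) a c"
    unfolding edges_on_def by blast
qed

lemma push_triple_closed:
  assumes "s \<in> T3" "Q \<subseteq> B \<times> A \<times> B"
  shows "push_triple s ` Q \<subseteq> B \<times> A \<times> B"
proof
  fix p assume "p \<in> push_triple s ` Q"
  then obtain x y z where "(x, y, z) \<in> Q" and p: "p = push_triple s (x, y, z)"
    by (metis imageE prod_cases3)
  then have "x \<in> B" "y \<in> A" "z \<in> B" using assms(2) by auto
  moreover have "x \<in> A" "z \<in> A" using calculation B_subset_A by auto
  ultimately show "p \<in> B \<times> A \<times> B"
    unfolding p push_triple_def using T3_closed_A[OF assms(1)] T3_closed_B[OF assms(1)] by simp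
qed

lemma path_edges_on_of_singletons:
  assumes single: "\<And>a c m b b'. a \<in> A \<Longrightarrow> c \<in> A \<Longrightarrow> m \<in> A \<Longrightarrow> b \<in> B \<Longrightarrow> b' \<in> B \<Longrightarrow>
      (a, c) \<in> (edges_on {(b, m, b')} a c)\<^sup>*"
    and "finite Q" "Q \<subseteq> B \<times> A \<times> B" "a \<in> A" "c \<in> A"
  shows "(a, c) \<in> (edges_on Q a c)\<^sup>*"
  using assms(2-)
proof (induction "card Q" arbitrary: Q a c rule: less_induct)
  case less
  show ?case
  proof (cases "Q = {}")
    case True
    have "(term_proj 1 [a, a, c], term_proj 1 [a, c, c]) \<in> edges_on Q a c"
      unfolding edges_on_def True using term_proj_T3 by blast
    then show ?thesis by simp
  next
    case False
    then obtain b m b' where q: "(b, m, b') \<in> Q" by auto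
    define Q0 where "Q0 = Q - {(b, m, b')}"
    have Q: "Q = insert (b, m, b') Q0" "finite Q0" "Q0 \<subseteq> B \<times> A \<times> B" "card Q0 < card Q"
      using q less.prems(1,2) card_Diff1_less[OF less.prems(1) q] unfolding Q0_def by auto
    have bmb': "b \<in> B" "m \<in> A" "b' \<in> B" using q less.prems(2) by auto
    have "edges_on {(b, m, b')} a c \<subseteq> (edges_on Q a c)\<^sup>*"
    proof
      fix e assume "e \<in> edges_on {(b, m, b')} a c"
      then obtain s where s: "s \<in> T3" "s [b, m, b'] \<in> B" and e: "e = (s [a, a, c], s [a, c, c])"
        unfolding edges_on_def by auto
      have "card (push_triple s ` Q0) < card Q"
        using card_image_le[OF Q(2), of "push_triple s"] Q(4) by linarith
      then have "e \<in> (edges_on (push_triple s ` Q0) (s [a, a, c]) (s [a, c, c]))\<^sup>*"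
        unfolding e by (rule less.hyps)
          (use Q(2) push_triple_closed[OF s(1) Q(3)] less.prems(3,4) T3_closed_A[OF s(1)] in auto)
      then show "e \<in> (edges_on Q a c)\<^sup>*"
        using rtrancl_mono[OF edges_on_push_triple[OF s(1) bmb'(1,3) s(2)]] Q(1) by blast
    qed
    then have "(edges_on {(b, m, b')} a c)\<^sup>* \<subseteq> (edges_on Q a c)\<^sup>*"
      by (rule rtrancl_subset_rtrancl)
    with single[OF less.prems(3,4) bmb'(2,1,3)] show ?thesis by blast
  qed
qed

definition Sg_pair :: "'a \<Rightarrow> 'a \<Rightarrow> 'a set" where
  "Sg_pair a c = {t [a, a, c] | t. t \<in> T3}"

lemma Sg_pair_subset: "a \<in> A \<Longrightarrow> c \<in> A \<Longrightarrow> Sg_pair a c \<subseteq> A"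
  unfolding Sg_pair_def using T3_closed_A by auto

lemma finite_Sg_pair: "a \<in> A \<Longrightarrow> c \<in> A \<Longrightarrow> finite (Sg_pair a c)"
  using Sg_pair_subset finite_A finite_subset by blast

lemma Sg_pair_same: "a \<in> A \<Longrightarrow> Sg_pair a a = {a}"
  unfolding Sg_pair_def using T3_idempotent by (auto intro!: exI[of _ "term_proj 0"])

lemma left_in_Sg_pair: "a \<in> Sg_pair a c"
  unfolding Sg_pair_def by (auto intro!: exI[of _ "term_proj 0"])

lemma right_in_Sg_pair: "c \<in> Sg_pair a c"
  unfolding Sg_pair_def by (auto intro!: exI[of _ "term_proj 2"])

lemma Sg_pair_shrink_right:
  assumes "q \<in> T3"
  shows "Sg_pair a (q [a, a, c]) \<subseteq> Sg_pair a c"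
proof
  fix x assume "x \<in> Sg_pair a (q [a, a, c])"
  then obtain s where s: "s \<in> T3" "x = s [a, a, q [a, a, c]]" unfolding Sg_pair_def by blast
  let ?q = "term_comp3 q (term_proj 0) (term_proj 0) (term_proj 2)"
  let ?t = "term_comp3 s (term_proj 0) (term_proj 0) ?q"
  have "?t \<in> T3" using s(1) assms by (intro term_comp3_in_term_ops term_proj_T3)
  moreover have "x = ?t [a, a, c]" using s(2) by simp
  ultimately show "x \<in> Sg_pair a c" unfolding Sg_pair_def by blast
qed

lemma Sg_pair_shrink_left:
  assumes "q \<in> T3"
  shows "Sg_pair (q [a, a, c]) c \<subseteq> Sg_pair a c"
proof
  fix x assume "x \<in> Sg_pair (q [a, a, c]) c"
  then obtain s where s: "s \<in> T3" "x = s [q [a, a, c], q [a, a, c], c]" unfolding Sg_pair_def by blast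
  let ?q = "term_comp3 q (term_proj 0) (term_proj 0) (term_proj 2)"
  let ?t = "term_comp3 s ?q ?q (term_proj 2)"
  have "?t \<in> T3" using s(1) assms by (intro term_comp3_in_term_ops term_proj_T3)
  moreover have "x = ?t [a, a, c]" using s(2) by simp
  ultimately show "x \<in> Sg_pair a c" unfolding Sg_pair_def by blast
qed

lemma Sg_pair_sum_less_right:
  assumes "finite I" "i \<in> I" "q \<in> T3" "\<forall>k. a k \<in> A" "\<forall>k. c k \<in> A"
    and "Sg_pair (a i) (q [a i, a i, c i]) \<noteq> Sg_pair (a i) (c i)"
  shows "(\<Sum>k\<in>I. card (Sg_pair (a k) (q [a k, a k, c k]))) < (\<Sum>k\<in>I. card (Sg_pair (a k) (c k)))"
proof -
  have "Sg_pair (a i) (q [a i, a i, c i]) \<subset> Sg_pair (a i) (c i)"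
    using Sg_pair_shrink_right[OF assms(3)] assms(6) by blast
  moreover have "\<forall>k\<in>I. finite (Sg_pair (a k) (c k))" using assms(4,5) finite_Sg_pair by blast
  ultimately show ?thesis
    using sum_card_strict_mono[OF assms(1,2), of "\<lambda>k. Sg_pair (a k) (c k)"
        "\<lambda>k. Sg_pair (a k) (q [a k, a k, c k])"] Sg_pair_shrink_right[OF assms(3)]
    by blast
qed

lemma Sg_pair_sum_less_left:
  assumes "finite I" "i \<in> I" "q \<in> T3" "\<forall>k. a k \<in> A" "\<forall>k. c k \<in> A"
    and "Sg_pair (q [a i, a i, c i]) (c i) \<noteq> Sg_pair (a i) (c i)"
  shows "(\<Sum>k\<in>I. card (Sg_pair (q [a k, a k, c k]) (c k))) < (\<Sum>k\<in>I. card (Sg_pair (a k) (c k)))"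
proof -
  have "Sg_pair (q [a i, a i, c i]) (c i) \<subset> Sg_pair (a i) (c i)"
    using Sg_pair_shrink_left[OF assms(3)] assms(6) by blast
  moreover have "\<forall>k\<in>I. finite (Sg_pair (a k) (c k))" using assms(4,5) finite_Sg_pair by blast
  ultimately show ?thesis
    using sum_card_strict_mono[OF assms(1,2), of "\<lambda>k. Sg_pair (a k) (c k)"
        "\<lambda>k. Sg_pair (q [a k, a k, c k]) (c k)"] Sg_pair_shrink_left[OF assms(3)]
    by blast
qed

text \<open>On a path from a to c the subalgebra Sg(a, w) eventually contains c; the absorbing
  term of the edge where this first happens is what makes the induction below progress.\<close>

lemma obtain_absorbing_term_capturing:
  assumes "a \<in> A" "a \<noteq> c" "(a, c) \<in> (edges_on (B \<times> A \<times> B) a c)\<^sup>*"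
  obtains t where "t \<in> T3" "absorbing t"
    "c \<notin> Sg_pair a (t [a, a, c])" "c \<in> Sg_pair a (t [a, c, c])"
proof -
  have "c \<notin> Sg_pair a a" using Sg_pair_same[OF assms(1)] assms(2) by simp
  moreover have "\<not> c \<notin> Sg_pair a c" using right_in_Sg_pair by simp
  ultimately obtain u v where
    "(u, v) \<in> edges_on (B \<times> A \<times> B) a c" "c \<notin> Sg_pair a u" "\<not> c \<notin> Sg_pair a v"
    by (rule rtrancl_exit[OF assms(3), where P = "\<lambda>w. c \<notin> Sg_pair a w"])
  moreover from this(1) obtain t where t: "t \<in> T3" "\<forall>(x, y, z)\<in>B \<times> A \<times> B. t [x, y, z] \<in> B"
    and "u = t [a, a, c]" "v = t [a, c, c]"
    unfolding edges_on_def by auto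
  moreover have "absorbing t" using t(2) by (simp add: absorbing_iff)
  ultimately show ?thesis using that t(1) by blast
qed

definition tuple_edges :: "('i \<Rightarrow> 'a) \<Rightarrow> ('i \<Rightarrow> 'a) \<Rightarrow> (('i \<Rightarrow> 'a) \<times> ('i \<Rightarrow> 'a)) set" where
  "tuple_edges a c = {(\<lambda>k. t [a k, a k, c k], \<lambda>k. t [a k, c k, c k]) | t. t \<in> T3 \<and> absorbing t}"

lemma tuple_edges_shrink_right:
  assumes "q \<in> T3" "\<forall>k. a k \<in> A"
  shows "tuple_edges a (\<lambda>k. q [a k, a k, c k]) \<subseteq> tuple_edges a c"
proof
  fix e assume "e \<in> tuple_edges a (\<lambda>k. q [a k, a k, c k])"
  then obtain s where s: "s \<in> T3" "absorbing s" and e: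
    "e = (\<lambda>k. s [a k, a k, q [a k, a k, c k]], \<lambda>k. s [a k, q [a k, a k, c k], q [a k, a k, c k]])"
    unfolding tuple_edges_def by blast
  define t where "t = term_comp3 s (term_proj 0)
      (term_comp3 q (term_proj 0) (term_proj 0) (term_proj 1))
      (term_comp3 q (term_proj 0) (term_proj 0) (term_proj 2))"
  have "t \<in> T3" unfolding t_def using s(1) assms(1) by (intro term_comp3_in_term_ops term_proj_T3)
  moreover have "absorbing t" unfolding absorbing_def
  proof (intro ballI)
    fix b x b' assume "b \<in> B" "x \<in> A" "b' \<in> B"
    moreover have "q [b, b, x] \<in> A" "q [b, b, b'] \<in> B"
      using calculation B_subset_A T3_closed_A T3_closed_B assms(1) by auto
    ultimately show "t [b, x, b'] \<in> B" using s(2) unfolding t_def absorbing_def by simp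
  qed
  moreover have "e = (\<lambda>k. t [a k, a k, c k], \<lambda>k. t [a k, c k, c k])"
    unfolding e t_def using T3_idempotent[OF assms(1)] assms(2) by simp
  ultimately show "e \<in> tuple_edges a c" unfolding tuple_edges_def by blast
qed

lemma tuple_edges_shrink_left:
  assumes "q \<in> T3" "\<forall>k. c k \<in> A"
  shows "tuple_edges (\<lambda>k. q [a k, a k, c k]) c \<subseteq> tuple_edges a c"
proof
  fix e assume "e \<in> tuple_edges (\<lambda>k. q [a k, a k, c k]) c"
  then obtain s where s: "s \<in> T3" "absorbing s" and e:
    "e = (\<lambda>k. s [q [a k, a k, c k], q [a k, a k, c k], c k], \<lambda>k. s [q [a k, a k, c k], c k, c k])"
    unfolding tuple_edges_def by blast
  define t where "t = term_comp3 s (term_comp3 q (term_proj 0) (term_proj 0) (term_proj 2))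
      (term_comp3 q (term_proj 1) (term_proj 1) (term_proj 2)) (term_proj 2)"
  have "t \<in> T3" unfolding t_def using s(1) assms(1) by (intro term_comp3_in_term_ops term_proj_T3)
  moreover have "absorbing t" unfolding absorbing_def
  proof (intro ballI)
    fix b x b' assume "b \<in> B" "x \<in> A" "b' \<in> B"
    moreover have "q [x, x, b'] \<in> A" "q [b, b, b'] \<in> B"
      using calculation B_subset_A T3_closed_A T3_closed_B assms(1) by auto
    ultimately show "t [b, x, b'] \<in> B" using s(2) unfolding t_def absorbing_def by simp
  qed
  moreover have "e = (\<lambda>k. t [a k, a k, c k], \<lambda>k. t [a k, c k, c k])"
    unfolding e t_def using T3_idempotent[OF assms(1)] assms(2) by simp
  ultimately show "e \<in> tuple_edges a c" unfolding tuple_edges_def by blast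
qed

lemma tuple_path_through_edge:
  assumes "t \<in> T3" "absorbing t" "\<forall>k. a k \<in> A"
    and "(a, \<lambda>k. t [a k, a k, c k]) \<in> (tuple_edges a (\<lambda>k. t [a k, a k, c k]))\<^sup>*"
  shows "(a, \<lambda>k. t [a k, c k, c k]) \<in> (tuple_edges a c)\<^sup>*"
proof -
  have "(a, \<lambda>k. t [a k, a k, c k]) \<in> (tuple_edges a c)\<^sup>*"
    using rtrancl_mono[OF tuple_edges_shrink_right[OF assms(1,3)]] assms(4) by blast
  moreover have "(\<lambda>k. t [a k, a k, c k], \<lambda>k. t [a k, c k, c k]) \<in> tuple_edges a c"
    unfolding tuple_edges_def using assms(1,2) by blast
  ultimately show ?thesis by (rule rtrancl_into_rtrancl)
qed

lemma tuple_path_apply_term: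
  assumes "(a, v) \<in> (tuple_edges a c)\<^sup>*" "r \<in> T3" "\<forall>k. a k \<in> A"
  shows "(a, \<lambda>k. r [a k, a k, v k]) \<in> (tuple_edges a c)\<^sup>*"
proof -
  have "(\<lambda>k. r [a k, a k, a k], \<lambda>k. r [a k, a k, v k]) \<in> (tuple_edges a c)\<^sup>*"
    using assms(1)
  proof (induction rule: rtrancl_induct)
    case (step v w)
    from step(2) obtain s where s: "s \<in> T3" "absorbing s"
      "v = (\<lambda>k. s [a k, a k, c k])" "w = (\<lambda>k. s [a k, c k, c k])"
      unfolding tuple_edges_def by blast
    define t where "t = term_comp3 r (term_proj 0) (term_proj 0) s"
    have "t \<in> T3" unfolding t_def using s(1) assms(2) by (intro term_comp3_in_term_ops term_proj_T3)
    moreover have "absorbing t"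
      using s(2) T3_closed_B[OF assms(2)] unfolding absorbing_def t_def by simp
    ultimately have "(\<lambda>k. r [a k, a k, v k], \<lambda>k. r [a k, a k, w k]) \<in> tuple_edges a c"
      unfolding tuple_edges_def s(3,4) t_def by (intro CollectI exI[of _ t]) (simp add: t_def)
    with step(3) show ?case by (rule rtrancl_into_rtrancl)
  qed simp
  moreover have "(\<lambda>k. r [a k, a k, a k]) = a" using T3_idempotent[OF assms(2)] assms(3) by simp
  ultimately show ?thesis by simp
qed

lemma tuple_path:
  assumes "finite I" and local_paths: "\<And>a c. a \<in> A \<Longrightarrow> c \<in> A \<Longrightarrow> (a, c) \<in> (edges_on (B \<times> A \<times> B) a c)\<^sup>*"
    and "\<forall>k. a k \<in> A" "\<forall>k. c k \<in> A" "\<forall>k. k \<notin> I \<longrightarrow> a k = c k"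
  shows "(a, c) \<in> (tuple_edges a c)\<^sup>*"
  using assms(3-)
proof (induction "\<Sum>k\<in>I. card (Sg_pair (a k) (c k))" arbitrary: a c rule: less_induct)
  case less
  note aA = less.prems(1) and cA = less.prems(2) and outside = less.prems(3)
  show ?case
  proof (cases "a = c")
    case False
    then obtain i where i: "i \<in> I" "a i \<noteq> c i" using outside by (auto simp: fun_eq_iff)
    obtain t where t: "t \<in> T3" "absorbing t"
      "c i \<notin> Sg_pair (a i) (t [a i, a i, c i])" "c i \<in> Sg_pair (a i) (t [a i, c i, c i])"
      using obtain_absorbing_term_capturing[OF _ i(2) local_paths] aA cA by metis
    define g where "g = (\<lambda>k. t [a k, a k, c k])"
    have "Sg_pair (a i) (g i) \<noteq> Sg_pair (a i) (c i)"
      using t(3) right_in_Sg_pair unfolding g_def by blast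
    then have "(\<Sum>k\<in>I. card (Sg_pair (a k) (g k))) < (\<Sum>k\<in>I. card (Sg_pair (a k) (c k)))"
      using Sg_pair_sum_less_right[OF assms(1) i(1) t(1) aA cA] unfolding g_def by blast
    then have "(a, g) \<in> (tuple_edges a g)\<^sup>*"
      by (rule less.hyps)
        (use aA cA outside T3_closed_A[OF t(1)] T3_idempotent[OF t(1)] in \<open>auto simp: g_def\<close>)
    then have ah: "(a, \<lambda>k. t [a k, c k, c k]) \<in> (tuple_edges a c)\<^sup>*"
      unfolding g_def by (rule tuple_path_through_edge[OF t(1,2) aA])
    obtain r where r: "r \<in> T3" "c i = r [a i, a i, t [a i, c i, c i]]"
      using t(4) unfolding Sg_pair_def by blast
    define q where "q = term_comp3 r (term_proj 0) (term_proj 0)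
        (term_comp3 t (term_proj 0) (term_proj 2) (term_proj 2))"
    have q: "q \<in> T3" unfolding q_def using r(1) t(1) by (intro term_comp3_in_term_ops term_proj_T3)
    define e where "e = (\<lambda>k. q [a k, a k, c k])"
    have ae: "(a, e) \<in> (tuple_edges a c)\<^sup>*"
      using tuple_path_apply_term[OF ah r(1) aA] unfolding e_def q_def by simp
    have "Sg_pair (e i) (c i) \<noteq> Sg_pair (a i) (c i)"
    proof -
      have "e i = c i" using r(2) unfolding e_def q_def by simp
      then show ?thesis using Sg_pair_same cA left_in_Sg_pair i(2) by (metis singletonD)
    qed
    then have "(\<Sum>k\<in>I. card (Sg_pair (e k) (c k))) < (\<Sum>k\<in>I. card (Sg_pair (a k) (c k)))"
      using Sg_pair_sum_less_left[OF assms(1) i(1) q aA cA] unfolding e_def by blast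
    then have "(e, c) \<in> (tuple_edges e c)\<^sup>*"
      by (rule less.hyps)
        (use aA cA outside T3_closed_A[OF q] T3_idempotent[OF q] in \<open>auto simp: e_def\<close>)
    then have "(e, c) \<in> (tuple_edges a c)\<^sup>*"
      using rtrancl_mono[OF tuple_edges_shrink_left[OF q cA]] unfolding e_def by blast
    with ae show ?thesis by (rule rtrancl_trans)
  qed simp
qed


text \<open>The first n+1 terms of a Jonsson chain; v is the last term on arguments (x, y, y),
  which is all that the next term has to match.\<close>

definition jonsson_prefix :: "nat \<Rightarrow> (nat \<Rightarrow> 'a list \<Rightarrow> 'a) \<Rightarrow> ('a \<Rightarrow> 'a \<Rightarrow> 'a) \<Rightarrow> bool" where
  "jonsson_prefix n d v \<longleftrightarrow>
     (\<forall>j\<le>n. d j \<in> T3 \<and> absorbing (d j)) \<and>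
     (\<forall>j<n. \<forall>x\<in>A. \<forall>y\<in>A. d j [x, y, y] = d (Suc j) [x, x, y]) \<and>
     (\<forall>x\<in>A. \<forall>y\<in>A. \<forall>z\<in>A. d 0 [x, y, z] = x) \<and>
     (\<forall>x\<in>A. \<forall>y\<in>A. d n [x, y, y] = v x y)"

lemma jonsson_prefix_0: "jonsson_prefix 0 (\<lambda>_. term_proj 0) (\<lambda>x y. x)"
  unfolding jonsson_prefix_def using absorbing_term_proj by simp

lemma jonsson_prefix_snoc:
  assumes "jonsson_prefix n d v" "t \<in> T3" "absorbing t"
    and "\<forall>x\<in>A. \<forall>y\<in>A. v x y = t [x, x, y]" "\<forall>x\<in>A. \<forall>y\<in>A. v' x y = t [x, y, y]"
  shows "jonsson_prefix (Suc n) (d(Suc n := t)) v'"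
  using assms unfolding jonsson_prefix_def by (auto simp: less_Suc_eq le_Suc_eq)

lemma jonsson_prefix_of_tuple_path:
  assumes "(a, w) \<in> (tuple_edges a c)\<^sup>*" and "\<And>x y. x \<in> A \<Longrightarrow> y \<in> A \<Longrightarrow> a (x, y) = x \<and> c (x, y) = y"
  shows "\<exists>n d. jonsson_prefix n d (\<lambda>x y. w (x, y))"
  using assms(1)
proof (induction rule: rtrancl_induct)
  case base
  have "jonsson_prefix 0 (\<lambda>_. term_proj 0) (\<lambda>x y. a (x, y))"
    using jonsson_prefix_0 assms(2) unfolding jonsson_prefix_def by simp
  then show ?case by blast
next
  case (step u w)
  then obtain n d where prefix: "jonsson_prefix n d (\<lambda>x y. u (x, y))" by blast
  from step(2) obtain t where t: "t \<in> T3" "absorbing t"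
    and u: "u = (\<lambda>k. t [a k, a k, c k])" and w: "w = (\<lambda>k. t [a k, c k, c k])"
    unfolding tuple_edges_def by blast
  have "jonsson_prefix (Suc n) (d(Suc n := t)) (\<lambda>x y. w (x, y))"
    by (rule jonsson_prefix_snoc[OF prefix t]) (simp_all add: u w assms(2))
  then show ?case by blast
qed

lemma jonsson_absorbs_of_prefix:
  assumes "jonsson_prefix n d v" "\<forall>x\<in>A. \<forall>y\<in>A. v x y = y"
  shows "jonsson_absorbs A F B"
proof -
  define d' where "d' = d(Suc n := term_proj 2)"
  have "jonsson_prefix (Suc n) d' (\<lambda>x y. y)"
    unfolding d'_def
    by (rule jonsson_prefix_snoc[OF assms(1) _ absorbing_term_proj(2)]) (use assms(2) in simp_all)
  then have "(\<forall>i\<le>Suc n. d' i \<in> T3) \<and> (\<forall>i\<le>Suc n. \<forall>b\<in>B. \<forall>a\<in>A. \<forall>b'\<in>B. d' i [b, a, b'] \<in> B) \<and>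
      (\<forall>i<Suc n. \<forall>x\<in>A. \<forall>y\<in>A. d' i [x, y, y] = d' (Suc i) [x, x, y]) \<and>
      (\<forall>x\<in>A. \<forall>y\<in>A. \<forall>z\<in>A. d' 0 [x, y, z] = x \<and> d' (Suc n) [x, y, z] = z)"
    unfolding jonsson_prefix_def absorbing_def by (simp add: d'_def)
  then show ?thesis unfolding jonsson_absorbs_def by blast
qed

lemma local_path_of_jonsson_absorbs:
  assumes "jonsson_absorbs A F B" "a \<in> A" "c \<in> A"
  shows "(a, c) \<in> (edges_on (B \<times> A \<times> B) a c)\<^sup>*"
proof -
  obtain n d where d: "\<forall>i\<le>n. d i \<in> T3" "\<forall>i\<le>n. \<forall>b\<in>B. \<forall>x\<in>A. \<forall>b'\<in>B. d i [b, x, b'] \<in> B"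
      "\<forall>i<n. \<forall>x\<in>A. \<forall>y\<in>A. d i [x, y, y] = d (Suc i) [x, x, y]"
      "\<forall>x\<in>A. \<forall>y\<in>A. \<forall>z\<in>A. d 0 [x, y, z] = x \<and> d n [x, y, z] = z"
    using assms(1) unfolding jonsson_absorbs_def by (elim exE conjE) (rule that)
  have "i \<le> n \<Longrightarrow> (a, d i [a, c, c]) \<in> (edges_on (B \<times> A \<times> B) a c)\<^sup>*" for i
  proof (induction i)
    case 0
    then show ?case using d(4) assms(2,3) by simp
  next
    case (Suc i)
    then have "(a, d (Suc i) [a, a, c]) \<in> (edges_on (B \<times> A \<times> B) a c)\<^sup>*"
      using d(3) assms(2,3) by simp
    moreover have "(d (Suc i) [a, a, c], d (Suc i) [a, c, c]) \<in> edges_on (B \<times> A \<times> B) a c"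
      using d(1,2) Suc.prems by (intro edges_on_absorbing) (auto simp: absorbing_def)
    ultimately show ?case by (rule rtrancl_into_rtrancl)
  qed
  then show ?thesis using d(4) assms(2,3) by fastforce
qed

lemma jonsson_absorbs_of_local_paths:
  assumes "\<And>a c. a \<in> A \<Longrightarrow> c \<in> A \<Longrightarrow> (a, c) \<in> (edges_on (B \<times> A \<times> B) a c)\<^sup>*"
  shows "jonsson_absorbs A F B"
proof (cases "A = {}")
  case True
  then show ?thesis using jonsson_absorbs_of_prefix[OF jonsson_prefix_0] by simp
next
  case False
  then obtain a0 where a0: "a0 \<in> A" by blast
  \<comment> \<open>generic tuples indexed by A \<times> A; the padding a0 outside A \<times> A is irrelevant\<close>
  define a :: "'a \<times> 'a \<Rightarrow> 'a" where "a = (\<lambda>p. if p \<in> A \<times> A then fst p else a0)"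
  define c :: "'a \<times> 'a \<Rightarrow> 'a" where "c = (\<lambda>p. if p \<in> A \<times> A then snd p else a0)"
  have "(a, c) \<in> (tuple_edges a c)\<^sup>*"
    using a0 finite_A by (intro tuple_path[of "A \<times> A", OF _ assms]) (auto simp: a_def c_def)
  then obtain n d where "jonsson_prefix n d (\<lambda>x y. c (x, y))"
    using jonsson_prefix_of_tuple_path[of a c c] by (auto simp: a_def c_def)
  then show ?thesis by (rule jonsson_absorbs_of_prefix) (simp add: c_def)
qed

lemma jonsson_absorbs_iff_local_paths:
  "jonsson_absorbs A F B \<longleftrightarrow> (\<forall>a\<in>A. \<forall>c\<in>A. (a, c) \<in> (edges_on (B \<times> A \<times> B) a c)\<^sup>*)"
  using local_path_of_jonsson_absorbs jonsson_absorbs_of_local_paths by blast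

lemma local_paths_iff_single_triple_paths:
  "(\<forall>a\<in>A. \<forall>c\<in>A. (a, c) \<in> (edges_on (B \<times> A \<times> B) a c)\<^sup>*) \<longleftrightarrow>
    (\<forall>a\<in>A. \<forall>c\<in>A. \<forall>d\<in>A. \<forall>b1\<in>B. \<forall>b2\<in>B. (a, c) \<in> (edges_on {(b1, d, b2)} a c)\<^sup>*)"
  (is "?all \<longleftrightarrow> ?single")
proof
  assume ?all
  show ?single
  proof (intro ballI)
    fix a c d b1 b2 assume "a \<in> A" "c \<in> A" "d \<in> A" "b1 \<in> B" "b2 \<in> B"
    then have "{(b1, d, b2)} \<subseteq> B \<times> A \<times> B" by simp
    with \<open>?all\<close> \<open>a \<in> A\<close> \<open>c \<in> A\<close> show "(a, c) \<in> (edges_on {(b1, d, b2)} a c)\<^sup>*"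
      using rtrancl_mono[OF edges_on_antimono] by blast
  qed
next
  assume ?single
  have finite: "finite (B \<times> A \<times> B)"
    using finite_A finite_subset[OF B_subset_A finite_A] by (intro finite_cartesian_product)
  show ?all
  proof (intro ballI)
    fix a c assume "a \<in> A" "c \<in> A"
    show "(a, c) \<in> (edges_on (B \<times> A \<times> B) a c)\<^sup>*"
      by (rule path_edges_on_of_singletons[OF _ finite order_refl \<open>a \<in> A\<close> \<open>c \<in> A\<close>])
        (use \<open>?single\<close> in blast)
  qed
qed

end

theorem theorem4p1:
  fixes A :: "'a set" and F :: "'a ops" and B :: "'a set"
  assumes "is_algebra A F" and "finite A" and "idempotent_alg A F"
    and "subuniverse A F B"
  shows "jonsson_absorbs A F B \<longleftrightarrow>
    (\<forall>a\<in>A. \<forall>c\<in>A. \<forall>d\<in>A. \<forall>b1\<in>B. \<forall>b2\<in>B. (a, c) \<in> (edgeE A F B a c d b1 b2)\<^sup>*)"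
proof -
  interpret idempotent_subuniverse A F B using assms by unfold_locales
  have "jonsson_absorbs A F B \<longleftrightarrow>
      (\<forall>a\<in>A. \<forall>c\<in>A. \<forall>d\<in>A. \<forall>b1\<in>B. \<forall>b2\<in>B. (a, c) \<in> (edges_on {(b1, d, b2)} a c)\<^sup>*)"
    by (simp only: jonsson_absorbs_iff_local_paths local_paths_iff_single_triple_paths)
  also have "\<dots> \<longleftrightarrow>
      (\<forall>a\<in>A. \<forall>c\<in>A. \<forall>d\<in>A. \<forall>b1\<in>B. \<forall>b2\<in>B. (a, c) \<in> (edgeE A F B a c d b1 b2)\<^sup>*)"
    by (intro ball_cong[OF refl]) (simp add: edgeE_eq_edges_on)
  finally show ?thesis .
qed

end
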